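(* Let $\omega$ be a weight function with $\omega(t)=o(t)$ as $t\to\infty$, and let $\{W^x\}_{x>0}$ be its associated weight matrix. Then for every $x>0$, writing $M=W^x$ and $m_k=M_k/k!$, there is $C\ge1$ such that for all $t>0$: $$\omega^*(t)\le C\omega_M^*(t/C)+C,\qquad \omega_M^*(t)\le C\omega^*(t/C)+C,$$ $$\omega^*(t)\le C\omega_m(C/t)+C,\qquad \omega_m(t)\le C\omega^*\!\left(\tfrac{1}{eCt}\right)+C,$$ and in particular $\exp(\omega^*(t))\le\left(\frac{e}{h_m(t/C)}\right)^C$.
   Context: A weight function is a continuous increasing $\omega:[0,\infty)\to[0,\infty)$ with $\omega(0)=0$, $\omega(t)\to\infty$, $\omega(2t)=O(\omega(t))$, $\omega(t)=O(t)$, $\log t=o(\omega(t))$, and $\varphi(t)=\omega(e^t)$ convex; normalized so that $\omega|_{[0,1]}=0$, $\varphi^*(t)=\sup_{s\ge0}(st-\varphi(s))$. Weight matrix: $W^x_k=\exp(\frac1x\varphi^*(xk))$. Conjugate: $\omega^*(t)=\sup_{s\ge0}(\omega(s)-st)$. For a positive sequence $M$ with $M_0=1$: $\omega_M(t)=\sup_k\log(t^k/M_k)$, $h_m(t)=\inf_k m_kt^k$. *)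

theory Defs
  imports "HOL-Analysis.Analysis" "HOL-Library.Landau_Symbols"
begin

text \<open>Weight function (Braun--Meise--Taylor type), normalized so that it vanishes on [0,1].
  Only the values on [0,\<infinity>) are relevant; asymptotic conditions are at_top.\<close>
definition weight_function :: "(real \<Rightarrow> real) \<Rightarrow> bool" where
  "weight_function \<omega> \<longleftrightarrow>
     continuous_on {0..} \<omega> \<and>
     mono_on {0..} \<omega> \<and>
     (\<forall>t\<ge>0. \<omega> t \<ge> 0) \<and>
     \<omega> 0 = 0 \<and>
     filterlim \<omega> at_top at_top \<and>
     (\<lambda>t. \<omega> (2 * t)) \<in> O(\<omega>) \<and>
     \<omega> \<in> O(\<lambda>t. t) \<and>
     ln \<in> o(\<omega>) \<and>
     convex_on UNIV (\<lambda>t. \<omega> (exp t)) \<and>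
     (\<forall>t\<in>{0..1}. \<omega> t = 0)"

definition phi_star :: "(real \<Rightarrow> real) \<Rightarrow> real \<Rightarrow> real" where
  "phi_star \<omega> t = (SUP s\<in>{0..}. s * t - \<omega> (exp s))"

definition weight_matrix :: "(real \<Rightarrow> real) \<Rightarrow> real \<Rightarrow> nat \<Rightarrow> real" where
  "weight_matrix \<omega> x k = exp (phi_star \<omega> (x * real k) / x)"

definition wconj :: "(real \<Rightarrow> real) \<Rightarrow> real \<Rightarrow> real" where
  "wconj f t = (SUP s\<in>{0..}. f s - s * t)"

definition assoc_fun :: "(nat \<Rightarrow> real) \<Rightarrow> real \<Rightarrow> real" where
  "assoc_fun M t = (if t \<le> 0 then 0 else (SUP k. ln (t ^ k / M k)))"

definition h_fun :: "(nat \<Rightarrow> real) \<Rightarrow> real \<Rightarrow> real" where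
  "h_fun m t = (INF k. m k * t ^ k)"

end

theory Submission
  imports Defs
begin

text \<open>The sequence M = W^x is built from the Young conjugate \<phi>^* of \<phi>(s) = \<omega>(e^s), so \<omega>_M
  is comparable to \<omega> in both directions. The Fenchel--Young inequality gives x \<omega>_M \<le> \<omega>;
  conversely, choosing k with x k close to the secant slope \<phi>(s) - \<phi>(s - 1) and using convexity of
  \<phi> gives \<omega>(t/e) - x log t \<le> x \<omega>_M(t), and \<omega>(2t) = O(\<omega>(t)), log t = o(\<omega>(t)) absorb these
  losses into \<omega> \<le> C \<omega>_M + C. Conjugation transfers both comparisons to \<omega>^* and \<omega>_M^*, all
  conjugates being finite because \<omega>(t) = o(t). Passing from M_k to m_k = M_k/k! costs a factor
  e^(st) in one direction (r^k/k! \<le> e^r) and, via k! \<le> k^k, a rescaling of the argument of \<omega>^*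
  by e in the other. Finally h_m(t) = exp(-\<omega>_m(1/t)).\<close>

section \<open>Conjugates and associated functions\<close>

lemma convex_on_secant_slopes_le:
  fixes f :: "real \<Rightarrow> real"
  assumes "convex_on UNIV f" "a < b" "b < c"
  shows "(f b - f a) * (c - b) \<le> (f c - f b) * (b - a)"
proof -
  have "(f a - f b) / (a - b) \<le> (f a - f c) / (a - c)"
   and "(f a - f c) / (a - c) \<le> (f b - f c) / (b - c)"
    using convex_on_slope_le[OF assms(1), of a c b] assms by auto
  then have "(f b - f a) / (b - a) \<le> (f c - f b) / (c - b)"
    by (smt (verit) minus_divide_divide)
  then show ?thesis
    using assms by (simp add: field_simps)
qed

lemma power_div_fact_le_exp:
  fixes r :: real
  assumes "0 \<le> r"
  shows "r ^ k / fact k \<le> exp r"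
proof -
  have exp_sums: "(\<lambda>n. r ^ n /\<^sub>R fact n) sums exp r"
    by (rule exp_converges)
  have "r ^ k / fact k = (\<Sum>n\<in>{k}. r ^ n /\<^sub>R fact n)"
    by (simp add: divide_inverse mult.commute)
  also have "\<dots> \<le> (\<Sum>n. r ^ n /\<^sub>R fact n)"
    using exp_sums assms by (intro sum_le_suminf) (auto simp: sums_iff)
  finally show ?thesis
    using exp_sums by (simp add: sums_iff)
qed

lemma wconj_upper:
  assumes "\<And>s. 0 \<le> s \<Longrightarrow> f s - s * t \<le> B" "0 \<le> s"
  shows "f s - s * t \<le> wconj f t"
  unfolding wconj_def using assms by (intro cSUP_upper bdd_aboveI2) auto

lemma wconj_least:
  assumes "\<And>s. 0 \<le> s \<Longrightarrow> f s - s * t \<le> B"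
  shows "wconj f t \<le> B"
  unfolding wconj_def using assms by (intro cSUP_least) auto

lemma wconj_antimono:
  assumes bound: "\<And>s. 0 \<le> s \<Longrightarrow> f s - s * a \<le> B" and "a \<le> b"
  shows "wconj f b \<le> wconj f a"
proof (rule wconj_least)
  fix s :: real
  assume "0 \<le> s"
  then have "f s - s * b \<le> f s - s * a"
    using \<open>a \<le> b\<close> by (simp add: mult_left_mono)
  also have "\<dots> \<le> wconj f a"
    using bound \<open>0 \<le> s\<close> by (rule wconj_upper)
  finally show "f s - s * b \<le> wconj f a" .
qed

lemma wconj_le_scaled:
  assumes "0 < C"
    and "\<And>s. 0 \<le> s \<Longrightarrow> f s \<le> C * g s + D"
    and "\<And>s. 0 \<le> s \<Longrightarrow> g s - s * (t / C) \<le> B"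
  shows "wconj f t \<le> C * B + D"
proof (rule wconj_least)
  fix s :: real
  assume s: "0 \<le> s"
  have "f s - s * t \<le> C * (g s - s * (t / C)) + D"
    using assms(1) assms(2)[OF s] by (simp add: right_diff_distrib)
  also have "\<dots> \<le> C * B + D"
    using assms(1) assms(3)[OF s] by simp
  finally show "f s - s * t \<le> C * B + D" .
qed

lemma assoc_fun_upper:
  assumes "0 < u" "\<And>k. ln (u ^ k / M k) \<le> B"
  shows "ln (u ^ k / M k) \<le> assoc_fun M u"
  unfolding assoc_fun_def using assms by (auto intro!: cSUP_upper bdd_aboveI2)

lemma assoc_fun_least:
  assumes "0 < u" "\<And>k. ln (u ^ k / M k) \<le> B"
  shows "assoc_fun M u \<le> B"
  unfolding assoc_fun_def using assms by (auto intro!: cSUP_least)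

lemma assoc_fun_nonneg:
  assumes "M 0 = 1" "\<And>k. 0 < u \<Longrightarrow> ln (u ^ k / M k) \<le> B"
  shows "0 \<le> assoc_fun M u"
proof (cases "0 < u")
  case True
  then show ?thesis
    using assoc_fun_upper[of u M B 0] assms by simp
qed (simp add: assoc_fun_def)

definition fact_scaled :: "(nat \<Rightarrow> real) \<Rightarrow> nat \<Rightarrow> real" where
  [simp]: "fact_scaled M k = M k / fact k"

lemma assoc_fun_minus_le_fact_scaled:
  assumes pos: "\<And>k. 0 < M k" and "M 0 = 1" and "0 < w" "0 \<le> s"
    and bound: "\<And>k. ln ((1 / w) ^ k / fact_scaled M k) \<le> B"
  shows "assoc_fun M s - s * w \<le> assoc_fun (fact_scaled M) (1 / w)"
proof (cases "s = 0")
  case True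
  then show ?thesis
    using assoc_fun_upper[of "1 / w" "fact_scaled M" B 0] assms by (simp add: assoc_fun_def)
next
  case False
  \<comment> \<open>Split s^k / M_k = ((1/w)^k / m_k) ((s w)^k / k!) and bound the second factor by e^(s w).\<close>
  have "ln (s ^ k / M k) \<le> assoc_fun (fact_scaled M) (1 / w) + s * w" for k
  proof -
    have split: "s ^ k / M k = ((1 / w) ^ k / fact_scaled M k) * ((s * w) ^ k / fact k)"
      using \<open>0 < w\<close> pos[of k] by (simp add: power_mult_distrib field_simps)
    have "0 < (1 / w) ^ k / fact_scaled M k" "0 < (s * w) ^ k / fact k"
      using \<open>0 < w\<close> \<open>0 \<le> s\<close> False pos[of k] by auto
    then have "ln (s ^ k / M k) = ln ((1 / w) ^ k / fact_scaled M k) + ln ((s * w) ^ k / fact k)"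
      unfolding split by (rule ln_mult_pos)
    moreover have "ln ((s * w) ^ k / fact k) \<le> s * w"
      using power_div_fact_le_exp[of "s * w" k] ln_le_cancel_iff[of _ "exp (s * w)"]
        \<open>0 < w\<close> \<open>0 \<le> s\<close> False
      by simp
    moreover have "ln ((1 / w) ^ k / fact_scaled M k) \<le> assoc_fun (fact_scaled M) (1 / w)"
      using \<open>0 < w\<close> bound by (intro assoc_fun_upper) auto
    ultimately show ?thesis
      by linarith
  qed
  then have "assoc_fun M s \<le> assoc_fun (fact_scaled M) (1 / w) + s * w"
    using \<open>0 < w\<close> \<open>0 \<le> s\<close> False by (intro assoc_fun_least) auto
  then show ?thesis
    by simp
qed

lemma h_fun_eq_exp_assoc_fun:
  assumes pos: "\<And>k. 0 < m k" and "0 < v" and bound: "\<And>k. ln ((1 / v) ^ k / m k) \<le> B"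
  shows "h_fun m v = exp (- assoc_fun m (1 / v))"
proof -
  define a where "a = assoc_fun m (1 / v)"
  have ln_term: "ln ((1 / v) ^ k / m k) = - ln (m k * v ^ k)" for k
    using pos[of k] \<open>0 < v\<close> by (simp add: power_one_over ln_div)
  have "exp (- a) \<le> m k * v ^ k" for k
  proof -
    have "- ln (m k * v ^ k) \<le> a"
      using assoc_fun_upper[of "1 / v" m B k] bound \<open>0 < v\<close> ln_term by (simp add: a_def)
    then show ?thesis
      using pos[of k] \<open>0 < v\<close> by (simp add: ln_ge_iff[symmetric])
  qed
  then have lower: "exp (- a) \<le> h_fun m v"
    unfolding h_fun_def by (intro cINF_greatest) auto
  then have "0 < h_fun m v"
    by (rule less_le_trans[OF exp_gt_zero])
  have "h_fun m v \<le> m k * v ^ k" for k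
    unfolding h_fun_def using pos \<open>0 < v\<close>
    by (intro cINF_lower bdd_belowI2[where m = 0]) (auto intro: less_imp_le)
  then have "a \<le> - ln (h_fun m v)"
    unfolding a_def using pos \<open>0 < v\<close> \<open>0 < h_fun m v\<close>
    by (intro assoc_fun_least) (auto simp: ln_term)
  then have "h_fun m v \<le> exp (- a)"
    using \<open>0 < h_fun m v\<close> by (metis exp_le_cancel_iff exp_ln le_minus_iff)
  with lower show ?thesis
    by (simp add: a_def)
qed

section \<open>Weight functions and the Young conjugate of \<phi>\<close>

context
  fixes \<omega> :: "real \<Rightarrow> real"
  assumes wf: "weight_function \<omega>"
begin

lemma weight_nonneg: "0 \<le> t \<Longrightarrow> 0 \<le> \<omega> t"
  using wf by (simp add: weight_function_def)

lemma weight_mono: "0 \<le> a \<Longrightarrow> a \<le> b \<Longrightarrow> \<omega> a \<le> \<omega> b"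
  using wf unfolding weight_function_def by (auto intro: mono_onD)

lemma weight_zero: "\<omega> 0 = 0"
  using wf by (simp add: weight_function_def)

lemma weight_exp1_mult_le: "\<exists>K>0. \<forall>\<^sub>F u in at_top. \<omega> (exp 1 * u) \<le> K * \<omega> u"
proof -
  have "(\<lambda>t. \<omega> (2 * t)) \<in> O(\<omega>)"
    using wf by (simp add: weight_function_def)
  then obtain K where "0 < K" and "\<forall>\<^sub>F u in at_top. norm (\<omega> (2 * u)) \<le> K * norm (\<omega> u)"
    by (rule landau_o.bigE)
  then obtain U where U: "\<And>u. U \<le> u \<Longrightarrow> \<bar>\<omega> (2 * u)\<bar> \<le> K * \<bar>\<omega> u\<bar>"
    by (auto simp: eventually_at_top_linorder)
  have "\<omega> (exp 1 * u) \<le> K\<^sup>2 * \<omega> u" if "max U 0 \<le> u" for u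
  proof -
    have "exp 1 * u \<le> 4 * u"
      using exp_le that by (intro mult_right_mono) auto
    then have "\<omega> (exp 1 * u) \<le> \<omega> (2 * (2 * u))"
      using that by (intro weight_mono) auto
    also have "\<dots> \<le> K * \<omega> (2 * u)"
      using U[of "2 * u"] that weight_nonneg by simp
    also have "\<dots> \<le> K * (K * \<omega> u)"
      using U[of u] that weight_nonneg \<open>0 < K\<close> by simp
    finally show ?thesis
      by (simp add: power2_eq_square)
  qed
  then show ?thesis
    using \<open>0 < K\<close> unfolding eventually_at_top_linorder
    by (intro exI[of _ "K\<^sup>2"] conjI exI[of _ "max U 0"]) auto
qed

lemma phi_star_term_bounded: "\<exists>B. \<forall>s\<ge>0. s * y - \<omega> (exp s) \<le> B"
proof -
  have "ln \<in> o(\<omega>)"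
    using wf by (simp add: weight_function_def)
  then have "\<forall>\<^sub>F u in at_top. norm (ln u) \<le> 1 / (\<bar>y\<bar> + 1) * norm (\<omega> u)"
    by (rule landau_o.smallD) (simp add: add_pos_nonneg)
  then obtain U where U: "\<And>u. U \<le> u \<Longrightarrow> \<bar>ln u\<bar> \<le> \<bar>\<omega> u\<bar> / (\<bar>y\<bar> + 1)"
    by (auto simp: eventually_at_top_linorder)
  have "s * y - \<omega> (exp s) \<le> max (ln U) 0 * \<bar>y\<bar>" if "0 \<le> s" for s
  proof (cases "U \<le> exp s")
    case True
    then have "s * (\<bar>y\<bar> + 1) \<le> \<omega> (exp s)"
      using U[of "exp s"] weight_nonneg[of "exp s"] \<open>0 \<le> s\<close>
      by (simp add: field_simps add_pos_nonneg)
    then show ?thesis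
      using \<open>0 \<le> s\<close> by (smt (verit) abs_ge_self distrib_left mult_nonneg_nonneg)
  next
    case False
    then have "s \<le> max (ln U) 0"
      by (smt (verit) exp_gt_zero ln_exp ln_less_cancel_iff)
    then have "s * y \<le> max (ln U) 0 * \<bar>y\<bar>"
      using \<open>0 \<le> s\<close> by (smt (verit) abs_ge_self abs_ge_zero mult_left_mono mult_right_mono)
    then show ?thesis
      using weight_nonneg[of "exp s"] by simp
  qed
  then show ?thesis
    by blast
qed

lemma phi_star_upper: "0 \<le> s \<Longrightarrow> s * y - \<omega> (exp s) \<le> phi_star \<omega> y"
  using phi_star_term_bounded[of y] unfolding phi_star_def
  by (auto intro!: cSUP_upper bdd_aboveI2)

lemma phi_star_nonneg: "0 \<le> phi_star \<omega> y"
proof -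
  have "\<omega> 1 = 0"
    using wf by (simp add: weight_function_def)
  then show ?thesis
    using phi_star_upper[of 0 y] by simp
qed

lemma phi_star_zero: "phi_star \<omega> 0 = 0"
proof -
  have "phi_star \<omega> 0 \<le> 0"
    unfolding phi_star_def by (rule cSUP_least) (auto intro: weight_nonneg)
  then show ?thesis
    using phi_star_nonneg[of 0] by simp
qed

lemma phi_star_le_secant:
  assumes "z \<le> \<omega> (exp s) - \<omega> (exp (s - 1))"
  shows "phi_star \<omega> z \<le> (\<omega> (exp s) - \<omega> (exp (s - 1))) * s - \<omega> (exp (s - 1))"
proof -
  define \<phi> where "\<phi> r = \<omega> (exp r)" for r
  define y where "y = \<phi> s - \<phi> (s - 1)"
  have convex: "convex_on UNIV \<phi>"
    using wf by (simp add: weight_function_def \<phi>_def[abs_def])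
  have mono: "\<phi> a \<le> \<phi> b" if "a \<le> b" for a b
    unfolding \<phi>_def using that by (intro weight_mono) auto
  have "0 \<le> y"
    using mono[of "s - 1" s] by (simp add: y_def)
  \<comment> \<open>The secant of \<phi> over [s - 1, s], lowered by y, stays below \<phi>: by convexity outside
    that interval and by monotonicity inside it.\<close>
  have support: "r * y - \<phi> r \<le> y * s - \<phi> (s - 1)" for r
  proof -
    consider "s \<le> r" | "s - 1 \<le> r" "r < s" | "r < s - 1"
      by linarith
    then show ?thesis
    proof cases
      case 1
      have "y * (r - s) \<le> \<phi> r - \<phi> s"
        using convex_on_secant_slopes_le[OF convex, of "s - 1" s r] 1
        by (cases "r = s") (auto simp: y_def)
      then show ?thesis
        using mono[of "s - 1" s] by (simp add: algebra_simps)
    next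
      case 2
      then have "r * y \<le> s * y"
        using \<open>0 \<le> y\<close> by (simp add: mult_right_mono)
      then show ?thesis
        using mono[of "s - 1" r] 2 by (simp add: algebra_simps)
    next
      case 3
      then have "\<phi> (s - 1) - \<phi> r \<le> y * (s - 1 - r)"
        using convex_on_secant_slopes_le[OF convex, of r "s - 1" s]
        by (simp add: y_def mult.commute)
      then show ?thesis
        using \<open>0 \<le> y\<close> by (simp add: algebra_simps)
    qed
  qed
  show ?thesis
    unfolding phi_star_def
  proof (rule cSUP_least)
    fix r :: real
    assume "r \<in> {0..}"
    then have "r * z \<le> r * y"
      using assms by (simp add: y_def \<phi>_def mult_left_mono)
    then show "r * z - \<omega> (exp r) \<le> (\<omega> (exp s) - \<omega> (exp (s - 1))) * s - \<omega> (exp (s - 1))"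
      using support[of r] by (simp add: y_def \<phi>_def)
  qed simp
qed

end

section \<open>The associated function of the weight matrix\<close>

lemma weight_matrix_pos: "0 < weight_matrix \<omega> x k"
  by (simp add: weight_matrix_def)

context
  fixes \<omega> :: "real \<Rightarrow> real" and x :: real
  assumes wf: "weight_function \<omega>" and "0 < x"
begin

lemma weight_matrix_0: "weight_matrix \<omega> x 0 = 1"
  by (simp add: weight_matrix_def phi_star_zero[OF wf])

lemma ln_power_div_weight_matrix:
  "0 < u \<Longrightarrow> ln (u ^ k / weight_matrix \<omega> x k) = real k * ln u - phi_star \<omega> (x * real k) / x"
  by (simp add: weight_matrix_def ln_div ln_realpow)

lemma ln_power_div_weight_matrix_le:
  assumes "0 < u"
  shows "ln (u ^ k / weight_matrix \<omega> x k) \<le> \<omega> u / x"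
proof (cases "1 \<le> u")
  case True
  have "ln u * (x * real k) - \<omega> (exp (ln u)) \<le> phi_star \<omega> (x * real k)"
    using True by (intro phi_star_upper[OF wf]) auto
  then have "x * (real k * ln u) / x \<le> (\<omega> u + phi_star \<omega> (x * real k)) / x"
    using assms \<open>0 < x\<close> by (intro divide_right_mono) (auto simp: algebra_simps)
  then show ?thesis
    using assms \<open>0 < x\<close> by (simp add: ln_power_div_weight_matrix add_divide_distrib)
next
  case False
  then have "real k * ln u \<le> 0"
    using assms by (simp add: mult_nonneg_nonpos)
  moreover have "0 \<le> phi_star \<omega> (x * real k) / x" "0 \<le> \<omega> u / x"
    using phi_star_nonneg[OF wf] weight_nonneg[OF wf, of u] assms \<open>0 < x\<close> by auto
  ultimately show ?thesis
    using assms by (simp add: ln_power_div_weight_matrix)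
qed

lemma assoc_fun_weight_matrix_upper:
  "0 < u \<Longrightarrow> ln (u ^ k / weight_matrix \<omega> x k) \<le> assoc_fun (weight_matrix \<omega> x) u"
  by (rule assoc_fun_upper) (auto intro: ln_power_div_weight_matrix_le)

lemma assoc_fun_weight_matrix_le:
  assumes "0 \<le> u"
  shows "assoc_fun (weight_matrix \<omega> x) u \<le> \<omega> u / x"
proof (cases "u = 0")
  case False
  with assms show ?thesis
    by (intro assoc_fun_least ln_power_div_weight_matrix_le) auto
qed (simp add: assoc_fun_def weight_zero[OF wf])

lemma assoc_fun_weight_matrix_nonneg: "0 \<le> assoc_fun (weight_matrix \<omega> x) u"
  by (rule assoc_fun_nonneg) (auto simp: weight_matrix_0 intro: ln_power_div_weight_matrix_le)

lemma weight_le_assoc_fun_weight_matrix_log: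
  assumes "1 \<le> t"
  shows "\<omega> (t / exp 1) - x * ln t \<le> x * assoc_fun (weight_matrix \<omega> x) t"
proof -
  define s where "s = ln t"
  define y where "y = \<omega> (exp s) - \<omega> (exp (s - 1))"
  have "0 \<le> s" "0 < t"
    using assms by (auto simp: s_def)
  have "0 \<le> y"
    unfolding y_def by (intro weight_mono[OF wf] diff_ge_0_iff_ge[THEN iffD2]) auto
  define k where "k = nat \<lfloor>y / x\<rfloor>"
  have "real k = of_int \<lfloor>y / x\<rfloor>"
    using \<open>0 \<le> y\<close> \<open>0 < x\<close> by (simp add: k_def)
  then have "real k \<le> y / x" "y / x < real k + 1"
    by linarith+
  then have k_low: "x * real k \<le> y" and k_high: "y - x * real k < x"
    using \<open>0 < x\<close> by (simp_all add: field_simps)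
  have "\<omega> (exp (s - 1)) - x * s \<le> x * real k * s - phi_star \<omega> (x * real k)"
  proof -
    have "(y - x * real k) * s \<le> x * s"
      using k_high \<open>0 \<le> s\<close> by (simp add: mult_right_mono)
    then show ?thesis
      using phi_star_le_secant[OF wf, of "x * real k" s] k_low by (simp add: y_def algebra_simps)
  qed
  also have "\<dots> = x * ln (t ^ k / weight_matrix \<omega> x k)"
    using \<open>0 < x\<close> \<open>0 < t\<close> by (simp add: ln_power_div_weight_matrix s_def right_diff_distrib)
  also have "\<dots> \<le> x * assoc_fun (weight_matrix \<omega> x) t"
    using assoc_fun_weight_matrix_upper[OF \<open>0 < t\<close>] \<open>0 < x\<close> by simp
  finally show ?thesis
    using \<open>0 < t\<close> by (simp add: s_def exp_diff)
qed

lemma weight_le_assoc_fun_weight_matrix: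
  "\<exists>C. \<forall>t\<ge>0. \<omega> t \<le> C * assoc_fun (weight_matrix \<omega> x) t + C"
proof -
  let ?\<omega>M = "assoc_fun (weight_matrix \<omega> x)"
  obtain K where "0 < K" and K: "\<forall>\<^sub>F u in at_top. \<omega> (exp 1 * u) \<le> K * \<omega> u"
    using weight_exp1_mult_le[OF wf] by blast
  have "ln \<in> o(\<omega>)"
    using wf by (simp add: weight_function_def)
  then have "\<forall>\<^sub>F u in at_top. norm (ln u) \<le> 1 / (2 * x) * norm (\<omega> u)"
    by (rule landau_o.smallD) (use \<open>0 < x\<close> in simp)
  with K eventually_ge_at_top[of "1 :: real"]
  have "\<forall>\<^sub>F u in at_top. \<omega> (exp 1 * u) \<le> K * \<omega> u \<and> \<bar>ln u\<bar> \<le> \<bar>\<omega> u\<bar> / (2 * x) \<and> 1 \<le> u"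
    by eventually_elim auto
  then obtain U where U: "\<And>u. U \<le> u \<Longrightarrow>
      \<omega> (exp 1 * u) \<le> K * \<omega> u \<and> \<bar>ln u\<bar> \<le> \<bar>\<omega> u\<bar> / (2 * x) \<and> 1 \<le> u"
    by (auto simp: eventually_at_top_linorder)
  define C where "C = max (2 * K * x) (\<omega> (exp 1 * U))"
  have "0 \<le> C"
    using \<open>0 < K\<close> \<open>0 < x\<close> by (simp add: C_def le_max_iff_disj)
  have "\<omega> t \<le> C * ?\<omega>M t + C" if "0 \<le> t" for t
  proof (cases "exp 1 * U \<le> t")
    case False
    then have "\<omega> t \<le> \<omega> (exp 1 * U)"
      using that by (intro weight_mono[OF wf]) auto
    moreover have "0 \<le> C * ?\<omega>M t"
      using assoc_fun_weight_matrix_nonneg \<open>0 \<le> C\<close> by simp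
    ultimately show ?thesis
      by (simp add: C_def)
  next
    case True
    define u where "u = t / exp 1"
    have u: "U \<le> u" "t = exp 1 * u"
      using True by (auto simp: u_def field_simps)
    with U[of u] have "1 \<le> u" and ln_u: "x * ln u \<le> \<omega> u / 2"
      using \<open>0 < x\<close> weight_nonneg[OF wf, of u] by (auto simp: field_simps)
    have "1 \<le> t"
      using u(2) \<open>1 \<le> u\<close> mult_mono[of 1 "exp 1" 1 u] by simp
    have "x * ln t = x + x * ln u"
      using u \<open>1 \<le> u\<close> by (simp add: ln_mult algebra_simps)
    then have "\<omega> u \<le> 2 * x * ?\<omega>M t + 2 * x"
      using weight_le_assoc_fun_weight_matrix_log[OF \<open>1 \<le> t\<close>] ln_u by (simp add: u_def)
    then have "K * \<omega> u \<le> K * (2 * x * ?\<omega>M t + 2 * x)"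
      using \<open>0 < K\<close> by (rule mult_left_mono[OF _ less_imp_le])
    then have "K * \<omega> u \<le> 2 * K * x * ?\<omega>M t + 2 * K * x"
      by (simp add: algebra_simps)
    moreover have "2 * K * x * ?\<omega>M t \<le> C * ?\<omega>M t"
      using assoc_fun_weight_matrix_nonneg
      by (intro mult_right_mono) (auto simp: C_def)
    moreover have "\<omega> t \<le> K * \<omega> u" "2 * K * x \<le> C"
      using U[of u] u by (simp_all add: C_def)
    ultimately show ?thesis
      by linarith
  qed
  then show ?thesis
    by blast
qed

end

section \<open>Weights of sublinear growth\<close>

context
  fixes \<omega> :: "real \<Rightarrow> real"
  assumes wf: "weight_function \<omega>" and small: "\<omega> \<in> o(\<lambda>t. t)"
begin

lemma wconj_weight_term_bounded:
  assumes "0 < t"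
  shows "\<exists>B. \<forall>s\<ge>0. \<omega> s - s * t \<le> B"
proof -
  obtain S where S: "\<And>s. S \<le> s \<Longrightarrow> \<bar>\<omega> s\<bar> \<le> t * \<bar>s\<bar>"
    using landau_o.smallD[OF small assms] by (auto simp: eventually_at_top_linorder)
  have "\<omega> s - s * t \<le> \<omega> (max S 0)" if "0 \<le> s" for s
  proof (cases "max S 0 \<le> s")
    case True
    then show ?thesis
      using S[of s] that weight_nonneg[OF wf, of "max S 0"] by (simp add: mult.commute)
  next
    case False
    then have "\<omega> s \<le> \<omega> (max S 0)"
      using that by (intro weight_mono[OF wf]) auto
    moreover have "0 \<le> s * t"
      using that assms by simp
    ultimately show ?thesis
      by linarith
  qed
  then show ?thesis
    by blast
qed

lemma wconj_weight_upper: "0 < t \<Longrightarrow> 0 \<le> s \<Longrightarrow> \<omega> s - s * t \<le> wconj \<omega> t"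
  using wconj_weight_term_bounded by (metis wconj_upper)

lemma wconj_weight_nonneg: "0 < t \<Longrightarrow> 0 \<le> wconj \<omega> t"
  using wconj_weight_upper[of t 0] weight_zero[OF wf] by simp

lemma wconj_weight_antimono: "0 < a \<Longrightarrow> a \<le> b \<Longrightarrow> wconj \<omega> b \<le> wconj \<omega> a"
  by (rule wconj_antimono[OF wconj_weight_upper])

context
  fixes x :: real
  assumes "0 < x"
begin

lemma assoc_fun_weight_matrix_minus_le:
  assumes "0 < v" "0 \<le> s"
  shows "assoc_fun (weight_matrix \<omega> x) s - s * v \<le> wconj \<omega> (x * v) / x"
proof -
  have "assoc_fun (weight_matrix \<omega> x) s - s * v \<le> (\<omega> s - s * (x * v)) / x"
    using assoc_fun_weight_matrix_le[OF wf \<open>0 < x\<close> \<open>0 \<le> s\<close>] \<open>0 < x\<close>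
    by (simp add: diff_divide_distrib)
  also have "\<dots> \<le> wconj \<omega> (x * v) / x"
    using wconj_weight_upper[of "x * v" s] assms \<open>0 < x\<close> by (intro divide_right_mono) auto
  finally show ?thesis .
qed

lemma ln_power_div_fact_scaled_le:
  assumes "0 < v"
  shows "ln (v ^ k / fact_scaled (weight_matrix \<omega> x) k) \<le> wconj \<omega> (x / (exp 1 * v)) / x"
proof (cases "k = 0")
  case True
  then show ?thesis
    using weight_matrix_0[OF wf \<open>0 < x\<close>] wconj_weight_nonneg[of "x / (exp 1 * v)"] assms \<open>0 < x\<close>
    by simp
next
  case False
  have M_pos: "0 < weight_matrix \<omega> x k"
    by (rule weight_matrix_pos)
  define u where "u = exp 1 * v * real k"
  have "0 < u"
    using False assms by (simp add: u_def)
  \<comment> \<open>k! \<le> k^k, and the surplus factor e^k of (e v k)^k is what shifts the conjugate's argument.\<close>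
  have "v ^ k / fact_scaled (weight_matrix \<omega> x) k = v ^ k * fact k / weight_matrix \<omega> x k"
    by simp
  also have "\<dots> \<le> v ^ k * real k ^ k / weight_matrix \<omega> x k"
    using fact_le_power[of k] M_pos assms by (intro divide_right_mono mult_left_mono) auto
  also have "\<dots> = u ^ k / weight_matrix \<omega> x k * exp (- real k)"
    by (simp add: u_def power_mult_distrib exp_of_nat_mult[symmetric] exp_minus field_simps)
  finally have "ln (v ^ k / fact_scaled (weight_matrix \<omega> x) k)
      \<le> ln (u ^ k / weight_matrix \<omega> x k * exp (- real k))"
    using M_pos assms \<open>0 < u\<close> by (subst ln_le_cancel_iff) auto
  also have "\<dots> = ln (u ^ k / weight_matrix \<omega> x k) - real k"
    using M_pos \<open>0 < u\<close> by (subst ln_mult_pos) auto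
  also have "\<dots> \<le> \<omega> u / x - real k"
    using ln_power_div_weight_matrix_le[OF wf \<open>0 < x\<close> \<open>0 < u\<close>] by simp
  also have "\<dots> = (\<omega> u - u * (x / (exp 1 * v))) / x"
    using \<open>0 < x\<close> assms by (simp add: u_def field_simps)
  also have "\<dots> \<le> wconj \<omega> (x / (exp 1 * v)) / x"
    using wconj_weight_upper[of "x / (exp 1 * v)" u] \<open>0 < u\<close> assms \<open>0 < x\<close>
    by (intro divide_right_mono) auto
  finally show ?thesis .
qed

context
  fixes C :: real
  assumes "1 \<le> C" and "1 / x \<le> C"
    and weight_le: "\<And>s. 0 \<le> s \<Longrightarrow> \<omega> s \<le> C * assoc_fun (weight_matrix \<omega> x) s + C"
begin

lemma div_le_C_mult: "0 \<le> a \<Longrightarrow> a / x \<le> C * a"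
  using mult_left_mono[OF \<open>1 / x \<le> C\<close>, of a] by (simp add: mult.commute)

lemma wconj_weight_le_wconj_assoc_fun:
  assumes "0 < t"
  shows "wconj \<omega> t \<le> C * wconj (assoc_fun (weight_matrix \<omega> x)) (t / C) + C"
proof (rule wconj_le_scaled[OF _ weight_le])
  show "0 < C"
    using \<open>1 \<le> C\<close> by simp
  have "\<And>s. 0 \<le> s \<Longrightarrow>
      assoc_fun (weight_matrix \<omega> x) s - s * (t / C) \<le> wconj \<omega> (x * (t / C)) / x"
    using assms \<open>0 < C\<close> by (intro assoc_fun_weight_matrix_minus_le) auto
  then show "assoc_fun (weight_matrix \<omega> x) s - s * (t / C)
      \<le> wconj (assoc_fun (weight_matrix \<omega> x)) (t / C)" if "0 \<le> s" for s
    using that by (rule wconj_upper)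
qed

lemma wconj_assoc_fun_le_wconj_weight:
  assumes "0 < t"
  shows "wconj (assoc_fun (weight_matrix \<omega> x)) t \<le> C * wconj \<omega> (t / C) + C"
proof -
  have "0 < t / C" "t / C \<le> x * t"
    using assms \<open>1 \<le> C\<close> \<open>1 / x \<le> C\<close> \<open>0 < x\<close> by (auto simp: field_simps)
  have "wconj (assoc_fun (weight_matrix \<omega> x)) t \<le> wconj \<omega> (x * t) / x"
    using assoc_fun_weight_matrix_minus_le[OF assms] by (rule wconj_least)
  also have "\<dots> \<le> wconj \<omega> (t / C) / x"
    using wconj_weight_antimono[OF \<open>0 < t / C\<close> \<open>t / C \<le> x * t\<close>] \<open>0 < x\<close>
    by (simp add: divide_right_mono)
  also have "\<dots> \<le> C * wconj \<omega> (t / C)"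
    using wconj_weight_nonneg[OF \<open>0 < t / C\<close>] by (rule div_le_C_mult)
  finally show ?thesis
    using \<open>1 \<le> C\<close> by simp
qed

lemma wconj_weight_le_assoc_fun_fact_scaled:
  assumes "0 < t"
  shows "wconj \<omega> t \<le> C * assoc_fun (fact_scaled (weight_matrix \<omega> x)) (C / t) + C"
proof (rule wconj_le_scaled[OF _ weight_le])
  show "0 < C"
    using \<open>1 \<le> C\<close> by simp
  show "assoc_fun (weight_matrix \<omega> x) s - s * (t / C)
      \<le> assoc_fun (fact_scaled (weight_matrix \<omega> x)) (C / t)" if "0 \<le> s" for s
    using assoc_fun_minus_le_fact_scaled[OF weight_matrix_pos weight_matrix_0[OF wf \<open>0 < x\<close>]
        _ that ln_power_div_fact_scaled_le, of "t / C"] assms \<open>0 < C\<close>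
    by simp
qed

lemma assoc_fun_fact_scaled_le_wconj_weight:
  assumes "0 < t"
  shows "assoc_fun (fact_scaled (weight_matrix \<omega> x)) t \<le> C * wconj \<omega> (1 / (exp 1 * C * t)) + C"
proof -
  have "0 < 1 / (exp 1 * C * t)" "1 / (exp 1 * C * t) \<le> x / (exp 1 * t)"
    using assms \<open>1 \<le> C\<close> \<open>1 / x \<le> C\<close> \<open>0 < x\<close> by (auto simp: field_simps)
  have "assoc_fun (fact_scaled (weight_matrix \<omega> x)) t \<le> wconj \<omega> (x / (exp 1 * t)) / x"
    using assms ln_power_div_fact_scaled_le[OF assms] by (rule assoc_fun_least)
  also have "\<dots> \<le> wconj \<omega> (1 / (exp 1 * C * t)) / x"
    using wconj_weight_antimono[OF \<open>0 < 1 / (exp 1 * C * t)\<close>] \<open>0 < x\<close> \<open>1 / (exp 1 * C * t) \<le> _\<close>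
    by (simp add: divide_right_mono)
  also have "\<dots> \<le> C * wconj \<omega> (1 / (exp 1 * C * t))"
    using wconj_weight_nonneg[OF \<open>0 < 1 / (exp 1 * C * t)\<close>] by (rule div_le_C_mult)
  finally show ?thesis
    using \<open>1 \<le> C\<close> by simp
qed

lemma exp_wconj_weight_le_h_fun:
  assumes "0 < t"
  shows "exp (wconj \<omega> t) \<le> (exp 1 / h_fun (fact_scaled (weight_matrix \<omega> x)) (t / C)) powr C"
proof -
  define m where "m = fact_scaled (weight_matrix \<omega> x)"
  have "0 < t / C" "0 < C / t"
    using assms \<open>1 \<le> C\<close> by simp_all
  then have "h_fun m (t / C) = exp (- assoc_fun m (C / t))"
    using weight_matrix_pos ln_power_div_fact_scaled_le[OF \<open>0 < C / t\<close>]
    by (subst h_fun_eq_exp_assoc_fun) (auto simp: m_def)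
  then have "(exp 1 / h_fun m (t / C)) powr C = exp (C * assoc_fun m (C / t) + C)"
    by (simp add: powr_def exp_minus divide_inverse algebra_simps flip: exp_add)
  then show ?thesis
    using wconj_weight_le_assoc_fun_fact_scaled[OF assms] by (simp add: m_def)
qed

end

end

end

theorem corollary3p11:
  fixes \<omega> :: "real \<Rightarrow> real" and x :: real
  assumes "weight_function \<omega>"
    and "\<omega> \<in> o(\<lambda>t. t)"
    and "x > 0"
  shows "\<exists>C\<ge>1. \<forall>t>0.
     (let M = weight_matrix \<omega> x; m = (\<lambda>k. M k / fact k) in
        wconj \<omega> t \<le> C * wconj (assoc_fun M) (t / C) + C \<and>
        wconj (assoc_fun M) t \<le> C * wconj \<omega> (t / C) + C \<and>
        wconj \<omega> t \<le> C * assoc_fun m (C / t) + C \<and>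
        assoc_fun m t \<le> C * wconj \<omega> (1 / (exp 1 * C * t)) + C \<and>
        exp (wconj \<omega> t) \<le> (exp 1 / h_fun m (t / C)) powr C)"
proof -
  obtain C0 where C0: "\<And>s. 0 \<le> s \<Longrightarrow> \<omega> s \<le> C0 * assoc_fun (weight_matrix \<omega> x) s + C0"
    using weight_le_assoc_fun_weight_matrix[OF assms(1,3)] by blast
  define C where "C = max (max C0 1) (1 / x)"
  have "1 \<le> C" "1 / x \<le> C"
    by (auto simp: C_def)
  have weight_le: "\<omega> s \<le> C * assoc_fun (weight_matrix \<omega> x) s + C" if "0 \<le> s" for s
  proof -
    have "C0 * assoc_fun (weight_matrix \<omega> x) s \<le> C * assoc_fun (weight_matrix \<omega> x) s"
      using assoc_fun_weight_matrix_nonneg[OF assms(1,3)]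
      by (intro mult_right_mono) (auto simp: C_def)
    then show ?thesis
      using C0[OF that] by (auto simp: C_def)
  qed
  have m: "(\<lambda>k. weight_matrix \<omega> x k / fact k) = fact_scaled (weight_matrix \<omega> x)"
    by (simp add: fun_eq_iff)
  note bounds = wconj_weight_le_wconj_assoc_fun wconj_assoc_fun_le_wconj_weight
    wconj_weight_le_assoc_fun_fact_scaled assoc_fun_fact_scaled_le_wconj_weight
    exp_wconj_weight_le_h_fun
  show ?thesis
    unfolding Let_def m using bounds[OF assms \<open>1 \<le> C\<close> \<open>1 / x \<le> C\<close> weight_le] \<open>1 \<le> C\<close>
    by blast
qed

end
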